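(* Let $n\ge2$. For $a_{ij}\in\{\pm1\}$ ($1\le i<j\le n$) and $b_1,\dots,b_n\in\{\pm1\}$, define $$\mathcal B_{Zn}=\sum_{1\le i<j\le n}a_{ij}(b_i-b_j).$$ Then the maximum of $\mathcal B_{Zn}$ over all $\pm1$ assignments equals $\lfloor n^2/2\rfloor$. Consequently, for any local hidden variable model, $\langle\mathcal B_{Zn}\rangle_{\mathrm{LHV}}\le\lfloor n^2/2\rfloor$.
   Context: A local hidden variable model assigns, for a variable $\lambda$ distributed with a probability density $q$, outcomes $A(\lambda,i)\in\{\pm1\}$ to each of Alice's settings $i$ and $B(\lambda,j)\in\{\pm1\}$ to each of Bob's settings $j$; the correlation is $\langle\alpha_i\beta_j\rangle_{\mathrm{LHV}}=\int q(\lambda)A(\lambda,i)B(\lambda,j)\,d\lambda$, and $\langle\mathcal B\rangle_{\mathrm{LHV}}$ is obtained from the bilinear expression $\mathcal B$ by replacing each product $a_ib_j$ with $\langle\alpha_i\beta_j\rangle_{\mathrm{LHV}}$. $\lfloor x\rfloor$ is the largest integer $\le x$. *)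

theory Defs
  imports "HOL-Analysis.Analysis"
begin

text \<open>Bell expression B_Zn for a +-1 assignment: Alice's settings are indexed by pairs
  (i,j) with 1 <= i < j <= n, Bob's settings by 1..n.\<close>
definition BZ :: "nat \<Rightarrow> (nat \<Rightarrow> nat \<Rightarrow> int) \<Rightarrow> (nat \<Rightarrow> int) \<Rightarrow> int" where
  "BZ n a b = (\<Sum>i=1..n. \<Sum>j=i+1..n. a i j * (b i - b j))"

definition pm1_assignments :: "nat \<Rightarrow> ((nat \<Rightarrow> nat \<Rightarrow> int) \<times> (nat \<Rightarrow> int)) set" where
  "pm1_assignments n = {(a, b). (\<forall>i j. 1 \<le> i \<and> i < j \<and> j \<le> n \<longrightarrow> a i j \<in> {-1, 1})
                              \<and> (\<forall>i. 1 \<le> i \<and> i \<le> n \<longrightarrow> b i \<in> {-1, 1})}"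

text \<open>Local hidden variable model: hidden variable l in a measure space M with
  probability density q; deterministic outcomes A l (i,j), B l k in {-1,1}.\<close>
definition lhv_model :: "'l measure \<Rightarrow> ('l \<Rightarrow> real) \<Rightarrow> ('l \<Rightarrow> nat \<times> nat \<Rightarrow> real)
    \<Rightarrow> ('l \<Rightarrow> nat \<Rightarrow> real) \<Rightarrow> bool" where
  "lhv_model M q A B \<longleftrightarrow>
     q \<in> borel_measurable M \<and> (\<forall>l\<in>space M. 0 \<le> q l) \<and> integrable M q \<and>
     (\<integral>l. q l \<partial>M) = 1 \<and>
     (\<forall>p. (\<lambda>l. A l p) \<in> borel_measurable M) \<and> (\<forall>k. (\<lambda>l. B l k) \<in> borel_measurable M) \<and>
     (\<forall>l\<in>space M. \<forall>p. A l p \<in> {-1, 1}) \<and> (\<forall>l\<in>space M. \<forall>k. B l k \<in> {-1, 1})"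

definition lhv_corr :: "'l measure \<Rightarrow> ('l \<Rightarrow> real) \<Rightarrow> ('l \<Rightarrow> nat \<times> nat \<Rightarrow> real)
    \<Rightarrow> ('l \<Rightarrow> nat \<Rightarrow> real) \<Rightarrow> nat \<times> nat \<Rightarrow> nat \<Rightarrow> real" where
  "lhv_corr M q A B p k = (\<integral>l. q l * A l p * B l k \<partial>M)"

text \<open>LHV value of B_Zn: each product a_ij b_k replaced by the LHV correlation.\<close>
definition BZ_lhv :: "nat \<Rightarrow> 'l measure \<Rightarrow> ('l \<Rightarrow> real) \<Rightarrow> ('l \<Rightarrow> nat \<times> nat \<Rightarrow> real)
    \<Rightarrow> ('l \<Rightarrow> nat \<Rightarrow> real) \<Rightarrow> real" where
  "BZ_lhv n M q A B = (\<Sum>i=1..n. \<Sum>j=i+1..n. lhv_corr M q A B (i,j) i - lhv_corr M q A B (i,j) j)"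

end

theory Submission imports Defs begin

(*
  For \<plusminus>1 values one has  a (x - y) \<le> 1 - x y  termwise, with equality for a suitable
  choice of a.  Hence B_Zn is bounded by  T(b) = \<Sum>_{i<j} (1 - b_i b_j), and the classical
  identity  2 T(b) = n^2 - (\<Sum>_i b_i)^2  gives  B_Zn \<le> n^2 div 2.  The bound is attained
  by taking b = +1 on the first n div 2 indices and -1 on the rest (then (\<Sum> b)^2 = n mod 2)
  and a_ij = b_i on disagreeing pairs.  Negating a shows the values are also bounded
  below, so the set of values is finite and its maximum is n^2 div 2 = \<lfloor>n^2/2\<rfloor>.

  For the LHV statement, linearity of the integral writes \<langle>B_Zn\<rangle>_LHV as the integral of
  q(\<lambda>) times B_Zn evaluated at the deterministic outcomes of \<lambda>; the deterministic
  bound and \<integral> q = 1 then give the same upper bound.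
*)

definition pair_sum :: "nat \<Rightarrow> (nat \<Rightarrow> nat \<Rightarrow> 'a::comm_monoid_add) \<Rightarrow> 'a" where
  "pair_sum n g = (\<Sum>i=1..n. \<Sum>j=i+1..n. g i j)"

lemma BZ_as_pair_sum: "BZ n a b = pair_sum n (\<lambda>i j. a i j * (b i - b j))"
  by (simp add: BZ_def pair_sum_def)

lemma pair_sum_Suc: "pair_sum (Suc n) g = pair_sum n g + (\<Sum>i=1..n. g i (Suc n))"
proof -
  have "pair_sum (Suc n) g = (\<Sum>i=1..n. \<Sum>j=i+1..Suc n. g i j)"
    by (simp add: pair_sum_def sum.cl_ivl_Suc)
  also have "\<dots> = (\<Sum>i=1..n. (\<Sum>j=i+1..n. g i j) + g i (Suc n))"
    by (rule sum.cong) (auto simp: sum.cl_ivl_Suc)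
  finally show ?thesis by (simp add: pair_sum_def sum.distrib)
qed

lemma pair_disagreement_identity:
  fixes b :: "nat \<Rightarrow> 'a::comm_ring_1"
  assumes "\<And>i. 1 \<le> i \<Longrightarrow> i \<le> n \<Longrightarrow> b i * b i = 1"
  shows "2 * pair_sum n (\<lambda>i j. 1 - b i * b j) = of_nat n ^ 2 - (\<Sum>i=1..n. b i) ^ 2"
  using assms
proof (induction n)
  case 0
  then show ?case by (simp add: pair_sum_def)
next
  case (Suc n)
  let ?S = "\<Sum>i=1..n. b i" and ?x = "b (Suc n)"
  have IH: "2 * pair_sum n (\<lambda>i j. 1 - b i * b j) = of_nat n ^ 2 - ?S ^ 2"
    using Suc by auto
  have unit: "?x * ?x = 1" using Suc.prems by simp
  have new_pairs: "(\<Sum>i=1..n. 1 - b i * ?x) = of_nat n - ?S * ?x"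
    by (simp add: sum_subtractf sum_distrib_right)
  have "2 * pair_sum (Suc n) (\<lambda>i j. 1 - b i * b j)
        = 2 * pair_sum n (\<lambda>i j. 1 - b i * b j) + 2 * (\<Sum>i=1..n. 1 - b i * ?x)"
    by (simp add: pair_sum_Suc distrib_left)
  also have "\<dots> = of_nat n ^ 2 - ?S ^ 2 + 2 * (of_nat n - ?S * ?x)"
    by (simp only: IH new_pairs)
  also have "\<dots> = of_nat (Suc n) ^ 2 - (?S + ?x) ^ 2"
    using unit by (simp add: power2_eq_square algebra_simps)
  finally show ?case by simp
qed

lemma pm1_term_le:
  fixes a x y :: int
  assumes "a \<in> {-1, 1}" "x \<in> {-1, 1}" "y \<in> {-1, 1}"
  shows "a * (x - y) \<le> 1 - x * y"
  using assms by auto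

lemma BZ_le_disagreement:
  assumes "(a, b) \<in> pm1_assignments n"
  shows "BZ n a b \<le> pair_sum n (\<lambda>i j. 1 - b i * b j)"
  unfolding BZ_as_pair_sum pair_sum_def
proof (intro sum_mono)
  fix i j assume "i \<in> {1..n}" "j \<in> {i+1..n}"
  with assms show "a i j * (b i - b j) \<le> 1 - b i * b j"
    by (intro pm1_term_le) (auto simp: pm1_assignments_def)
qed

lemma BZ_upper:
  assumes "(a, b) \<in> pm1_assignments n"
  shows "BZ n a b \<le> int (n^2) div 2"
proof -
  have "b i * b i = 1" if "1 \<le> i" "i \<le> n" for i
    using assms that by (auto simp: pm1_assignments_def)
  then have "2 * pair_sum n (\<lambda>i j. 1 - b i * b j) \<le> int n ^ 2"
    using pair_disagreement_identity[of n b] by simp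
  with BZ_le_disagreement[OF assms] have "2 * BZ n a b \<le> int n ^ 2" by linarith
  then show ?thesis by simp
qed

text \<open>Flipping all of Alice's outcomes negates B_Zn, so the upper bound also bounds
  the values from below; this makes the set of values finite.\<close>
lemma BZ_lower:
  assumes "(a, b) \<in> pm1_assignments n"
  shows "- (int (n^2) div 2) \<le> BZ n a b"
proof -
  have "((\<lambda>i j. - a i j), b) \<in> pm1_assignments n"
    using assms by (auto simp: pm1_assignments_def)
  from BZ_upper[OF this] show ?thesis by (simp add: BZ_def sum_negf)
qed

lemma finite_BZ_values: "finite ((\<lambda>(a, b). BZ n a b) ` pm1_assignments n)"
proof (rule finite_subset)
  show "(\<lambda>(a, b). BZ n a b) ` pm1_assignments n \<subseteq> {- (int (n^2) div 2) .. int (n^2) div 2}"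
    using BZ_upper BZ_lower by fastforce
qed simp

lemma sum_of_split_signs: "(\<Sum>i=1..n. (if i \<le> m then 1 else -1) :: int) = 2 * int (min m n) - int n"
  by (induction n) auto

text \<open>Optimal assignment: b splits the indices as evenly as possible and a_ij = b_i on
  disagreeing pairs, so every term equals 1 - b_i b_j and (\<Sum> b)^2 = n mod 2.\<close>
lemma BZ_attained:
  "\<exists>(a, b) \<in> pm1_assignments n. BZ n a b = int (n^2) div 2"
proof -
  define m where "m = n div 2"
  define b :: "nat \<Rightarrow> int" where "b i = (if i \<le> m then 1 else -1)" for i
  define a :: "nat \<Rightarrow> nat \<Rightarrow> int" where "a i j = (if b i = b j then 1 else b i)" for i j
  have mem: "(a, b) \<in> pm1_assignments n"
    by (auto simp: pm1_assignments_def a_def b_def)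
  have tight: "BZ n a b = pair_sum n (\<lambda>i j. 1 - b i * b j)"
    unfolding BZ_as_pair_sum pair_sum_def by (intro sum.cong refl) (auto simp: a_def b_def)
  have "min m n = m" by (simp add: m_def)
  then have total: "(\<Sum>i=1..n. b i) = 2 * int m - int n"
    using sum_of_split_signs[where n=n and m=m] by (simp add: b_def)
  have balanced: "(2 * int m - int n) ^ 2 = int n mod 2"
    unfolding m_def by (cases "even n") (auto elim!: evenE oddE simp: power2_eq_square)
  have "2 * BZ n a b = int n ^ 2 - int n mod 2"
    using tight total balanced pair_disagreement_identity[of n b] by (simp add: b_def)
  moreover have "int n ^ 2 mod 2 = int n mod 2"
    by (simp add: mod2_eq_if)
  ultimately have "BZ n a b = int (n^2) div 2" by simp
  with mem show ?thesis by blast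
qed

lemma floor_half_square: "\<lfloor>real (n^2) / 2\<rfloor> = int (n^2) div 2"
  by (metis floor_divide_of_int_eq of_int_of_nat_eq of_int_numeral)

lemma deterministic_bound:
  fixes A :: "nat \<times> nat \<Rightarrow> real" and B :: "nat \<Rightarrow> real"
  assumes A: "\<forall>p. A p \<in> {-1, 1}" and B: "\<forall>k. B k \<in> {-1, 1}"
  shows "pair_sum n (\<lambda>i j. A (i,j) * (B i - B j)) \<le> of_int (int (n^2) div 2)"
proof -
  define a :: "nat \<Rightarrow> nat \<Rightarrow> int" where "a i j = (if A (i,j) = 1 then 1 else -1)" for i j
  define b :: "nat \<Rightarrow> int" where "b k = (if B k = 1 then 1 else -1)" for k
  have "A (i,j) = of_int (a i j)" for i j using A[rule_format, of "(i,j)"] by (auto simp: a_def)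
  moreover have "B k = of_int (b k)" for k using B[rule_format, of k] by (auto simp: b_def)
  ultimately have "pair_sum n (\<lambda>i j. A (i,j) * (B i - B j)) = of_int (BZ n a b)"
    by (simp add: BZ_as_pair_sum pair_sum_def)
  moreover have "(a, b) \<in> pm1_assignments n"
    by (auto simp: pm1_assignments_def a_def b_def)
  ultimately show ?thesis using BZ_upper by simp
qed

text \<open>Each correlation integrand is dominated by the density q, hence integrable.\<close>
lemma lhv_integrand_integrable:
  assumes "lhv_model M q A B"
  shows "integrable M (\<lambda>l. q l * A l p * B l k)"
proof (rule Bochner_Integration.integrable_bound)
  show "integrable M q" using assms by (simp add: lhv_model_def)
  have "q \<in> borel_measurable M" "(\<lambda>l. A l p) \<in> borel_measurable M"
    "(\<lambda>l. B l k) \<in> borel_measurable M"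
    using assms unfolding lhv_model_def by blast+
  then show "(\<lambda>l. q l * A l p * B l k) \<in> borel_measurable M" by measurable
  show "AE l in M. norm (q l * A l p * B l k) \<le> norm (q l)"
  proof (rule AE_I2)
    fix l assume "l \<in> space M"
    then have "A l p \<in> {-1, 1}" "B l k \<in> {-1, 1}"
      using assms unfolding lhv_model_def by blast+
    then have "\<bar>A l p\<bar> = 1" "\<bar>B l k\<bar> = 1" by auto
    then show "norm (q l * A l p * B l k) \<le> norm (q l)" by (simp add: abs_mult)
  qed
qed

lemma weighted_pair_sum_expand:
  "q l * pair_sum n (\<lambda>i j. A l (i,j) * (B l i - B l j))
   = (\<Sum>i=1..n. \<Sum>j=i+1..n. q l * A l (i,j) * B l i - q l * A l (i,j) * B l j)"
  for q :: "'l \<Rightarrow> real"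
  by (simp add: pair_sum_def sum_distrib_left algebra_simps)

lemma lhv_average_integrable:
  assumes "lhv_model M q A B"
  shows "integrable M (\<lambda>l. q l * pair_sum n (\<lambda>i j. A l (i,j) * (B l i - B l j)))"
  unfolding weighted_pair_sum_expand using lhv_integrand_integrable[OF assms] by auto

lemma BZ_lhv_as_average:
  assumes "lhv_model M q A B"
  shows "BZ_lhv n M q A B = (\<integral>l. q l * pair_sum n (\<lambda>i j. A l (i,j) * (B l i - B l j)) \<partial>M)"
  unfolding weighted_pair_sum_expand BZ_lhv_def lhv_corr_def
  using lhv_integrand_integrable[OF assms]
  by (simp add: Bochner_Integration.integral_sum Bochner_Integration.integral_diff)

text \<open>LHV bound: an average of deterministic values, each at most n^2 div 2, with
  total weight 1.\<close>
lemma BZ_lhv_upper: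
  assumes lhv: "lhv_model M q A B"
  shows "BZ_lhv n M q A B \<le> of_int (int (n^2) div 2)"
proof -
  let ?c = "real_of_int (int (n^2) div 2)"
  let ?D = "\<lambda>l. pair_sum n (\<lambda>i j. A l (i,j) * (B l i - B l j))"
  have q: "integrable M q" "\<forall>l\<in>space M. 0 \<le> q l" "(\<integral>l. q l \<partial>M) = 1"
    using lhv by (auto simp: lhv_model_def)
  from lhv_average_integrable[OF lhv] have "(\<integral>l. q l * ?D l \<partial>M) \<le> (\<integral>l. q l * ?c \<partial>M)"
  proof (rule integral_mono)
    show "integrable M (\<lambda>l. q l * ?c)" using q by simp
    fix l assume "l \<in> space M"
    then show "q l * ?D l \<le> q l * ?c"
      using q lhv deterministic_bound[of "A l" "B l" n]
      by (intro mult_left_mono) (auto simp: lhv_model_def)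
  qed
  also have "\<dots> = ?c" using q by simp
  finally show ?thesis using BZ_lhv_as_average[OF lhv] by simp
qed

theorem mainTheorem7:
  fixes n :: nat
  assumes "n \<ge> 2"
  shows "Max ((\<lambda>(a, b). BZ n a b) ` pm1_assignments n) = \<lfloor>real (n^2) / 2\<rfloor>
         \<and> (\<forall>(M :: 'l measure) q A B. lhv_model M q A B \<longrightarrow>
               BZ_lhv n M q A B \<le> of_int \<lfloor>real (n^2) / 2\<rfloor>)"
proof
  show "Max ((\<lambda>(a, b). BZ n a b) ` pm1_assignments n) = \<lfloor>real (n^2) / 2\<rfloor>"
    unfolding floor_half_square
  proof (rule Max_eqI[OF finite_BZ_values])
    show "y \<le> int (n^2) div 2" if "y \<in> (\<lambda>(a, b). BZ n a b) ` pm1_assignments n" for y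
      using that BZ_upper by auto
    show "int (n^2) div 2 \<in> (\<lambda>(a, b). BZ n a b) ` pm1_assignments n"
      using BZ_attained[of n] by force
  qed
  show "\<forall>(M :: 'l measure) q A B. lhv_model M q A B \<longrightarrow>
          BZ_lhv n M q A B \<le> of_int \<lfloor>real (n^2) / 2\<rfloor>"
    using BZ_lhv_upper unfolding floor_half_square by blast
qed

end
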